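(* Let $P$ be a point in $D$ with $P\neq O=(0,0)$. Let $u_1,u_2\in S^1$ be the intersections of the line $OP$ with $S^1$, with $|u_1P|<|u_2P|$. Then $\psi_P'(v)$ is monotonically increasing for $v\in arc[u_2,u_1)$ and monotonically decreasing for $v\in arc[u_1,u_2)$.
   Context: $D$ is the open unit disk in $\mathbb R^2$, $S^1$ its boundary circle identified with $\mathbb R/\mathbb Z$ via the counterclockwise normalized angle, $\pi:\mathbb R\to S^1$ the projection. For $P\in D$ and $v\in S^1$, $\psi_P(v)$ is the second intersection point of the line $vP$ with $S^1$. For a homeomorphism $g$ of $S^1$ with lift $\overline g$ ($\overline g(0)\in[0,1)$), $g'(x)=\overline g'(u)$ for $u\in\pi^{-1}(x)$. For $w_1,w_2\in S^1$, $arc[w_1,w_2)$ is the counterclockwise arc from $w_1$ to $w_2$ including $w_1$ and excluding $w_2$; monotonicity is along the arc traversed counterclockwise. $|XY|$ is Euclidean distance. *)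

theory Defs
  imports "HOL-Analysis.Analysis"
begin

text \<open>The plane R^2 is identified with the complex plane; D = ball 0 1, S^1 = sphere 0 1.
  S^1 is identified with R/Z via the normalized counterclockwise angle:
  the projection pi : R -> S^1 is circ_pi.\<close>

definition circ_pi :: "real \<Rightarrow> complex" where
  "circ_pi t = cis (2 * pi * t)"

definition psi :: "complex \<Rightarrow> complex \<Rightarrow> complex" where
  "psi P v = (THE w. norm w = 1 \<and> w \<noteq> v \<and> (\<exists>t::real. w = v + of_real t * (P - v)))"

definition circ_lift :: "(complex \<Rightarrow> complex) \<Rightarrow> real \<Rightarrow> real" where
  "circ_lift g = (SOME gb. continuous_on UNIV gb \<and> (\<forall>u. circ_pi (gb u) = g (circ_pi u))
                          \<and> 0 \<le> gb 0 \<and> gb 0 < 1)"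

definition circ_deriv :: "(complex \<Rightarrow> complex) \<Rightarrow> complex \<Rightarrow> real" where
  "circ_deriv g x = deriv (circ_lift g) (SOME u. circ_pi u = x)"

text \<open>f is monotonically increasing (resp. decreasing) on arc[w1,w2), traversed counterclockwise:
  parametrize the arc as circ_pi t for t in [a, a + frac(b - a)) where circ_pi a = w1, circ_pi b = w2.\<close>
definition incr_on_arc :: "(complex \<Rightarrow> real) \<Rightarrow> complex \<Rightarrow> complex \<Rightarrow> bool" where
  "incr_on_arc f w1 w2 \<longleftrightarrow> (\<forall>a b. circ_pi a = w1 \<longrightarrow> circ_pi b = w2 \<longrightarrow>
      mono_on {a..<a + frac (b - a)} (\<lambda>t. f (circ_pi t)))"

definition decr_on_arc :: "(complex \<Rightarrow> real) \<Rightarrow> complex \<Rightarrow> complex \<Rightarrow> bool" where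
  "decr_on_arc f w1 w2 \<longleftrightarrow> (\<forall>a b. circ_pi a = w1 \<longrightarrow> circ_pi b = w2 \<longrightarrow>
      monotone_on {a..<a + frac (b - a)} (\<le>) (\<ge>) (\<lambda>t. f (circ_pi t)))"

end

theory Submission
  imports Defs
begin

(* With q = 1 - cnj v * P, the second intersection point is psi_P(v) = - v q / cnj q. Since
   Re q > 0, for v = pi(u) the angle 2 pi u + pi + 2 Arg q of psi_P(v) varies continuously and
   gives the lift of psi_P, whose derivative is the Poisson kernel (1 - |P|^2) / |v - P|^2.
   Hence psi_P' decreases exactly where |v - P| increases, and as P lies on the diameter from
   u2 to u1, |v - P| increases while v runs along either half circle from u1 to u2. *)

lemma norm_circ_pi [simp]: "norm (circ_pi t) = 1"
  by (simp add: circ_pi_def)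

lemma circ_pi_add: "circ_pi (s + t) = circ_pi s * circ_pi t"
  by (simp add: circ_pi_def distrib_left cis_mult)

lemma circ_pi_diff: "circ_pi (s - t) = circ_pi s / circ_pi t"
  by (simp add: circ_pi_def right_diff_distrib cis_divide)

lemma circ_pi_half: "circ_pi (1/2) = -1"
  by (simp add: circ_pi_def)

lemma circ_pi_eq_1_iff: "circ_pi t = 1 \<longleftrightarrow> t \<in> \<int>"
proof
  assume "circ_pi t = 1"
  then have "cos (2 * pi * t) = 1"
    unfolding circ_pi_def by (metis cis.sel(1) one_complex.sel(1))
  then obtain n :: int where "2 * pi * t = of_int n * 2 * pi"
    unfolding cos_one_2pi_int by blast
  then show "t \<in> \<int>" by simp
qed (simp add: circ_pi_def cis_multiple_2pi)

lemma circ_pi_eq_iff: "circ_pi s = circ_pi t \<longleftrightarrow> s - t \<in> \<int>"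
  by (simp add: circ_pi_diff flip: circ_pi_eq_1_iff) (simp add: circ_pi_def cis_neq_zero)

lemma cnj_circ_pi_eq_exp: "cnj (circ_pi t) = exp (- (2 * of_real pi * \<i>) * of_real t)"
proof -
  have "cnj (circ_pi t) = cis (- (2 * pi * t))"
    by (simp add: circ_pi_def cis_cnj)
  then show ?thesis
    by (simp add: cis_conv_exp algebra_simps)
qed

lemma frac_diff_antipodal:
  assumes "circ_pi b = - circ_pi a"
  shows "frac (b - a) = 1/2"
proof -
  have "circ_pi b = circ_pi (a + 1/2)"
    using assms by (simp add: circ_pi_add circ_pi_half)
  then have "b - (a + 1/2) \<in> \<int>"
    by (simp only: circ_pi_eq_iff)
  then obtain n where "b - a = of_int n + 1/2"
    by (metis Ints_cases diff_diff_eq diff_eq_eq)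
  then show ?thesis by (simp add: frac_def)
qed

lemma circ_lift_eqI:
  assumes cont: "continuous_on UNIV gb"
    and lift: "\<And>u. circ_pi (gb u) = g (circ_pi u)"
    and "0 \<le> gb 0" "gb 0 < 1"
  shows "circ_lift g = gb"
proof -
  let ?is_lift = "\<lambda>gb. continuous_on UNIV gb \<and> (\<forall>u. circ_pi (gb u) = g (circ_pi u))
                        \<and> 0 \<le> gb 0 \<and> gb 0 < 1"
  have "?is_lift (circ_lift g)"
    unfolding circ_lift_def by (rule someI[of ?is_lift gb]) (use assms in blast)
  then have lift': "continuous_on UNIV (circ_lift g)" "\<And>u. circ_pi (circ_lift g u) = g (circ_pi u)"
    and "0 \<le> circ_lift g 0" "circ_lift g 0 < 1"
    by auto
  define h where "h u = circ_lift g u - gb u" for u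
  have h_Ints: "h u \<in> \<int>" for u
    unfolding h_def using lift lift' by (simp flip: circ_pi_eq_iff)
  have "h constant_on UNIV"
  proof (rule continuous_discrete_range_constant)
    show "continuous_on UNIV h"
      unfolding h_def using cont lift' by (intro continuous_intros)
    show "\<exists>e>0. \<forall>y. y \<in> UNIV \<and> h y \<noteq> h x \<longrightarrow> e \<le> norm (h y - h x)" for x
      by (intro exI[of _ 1]) (auto intro!: Ints_nonzero_abs_ge1 Ints_diff h_Ints)
  qed simp
  moreover have "h 0 = 0"
    using Ints_nonzero_abs_ge1[OF h_Ints[of 0]] assms \<open>0 \<le> circ_lift g 0\<close> \<open>circ_lift g 0 < 1\<close>
    unfolding h_def by fastforce
  ultimately have "h u = 0" for u
    unfolding constant_on_def by (metis UNIV_I)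
  then show ?thesis
    unfolding h_def by fastforce
qed

lemma norm_one_minus_scaled_eq_1_iff:
  fixes q :: complex
  assumes "q \<noteq> 0"
  shows "norm (1 - of_real s * q) = 1 \<longleftrightarrow> s = 0 \<or> s = 2 * Re q / (norm q)\<^sup>2"
proof -
  have "(norm (1 - of_real s * q))\<^sup>2 = (1 - s * Re q)\<^sup>2 + (s * Im q)\<^sup>2"
    by (simp add: cmod_power2)
  also have "\<dots> = 1 + s * (s * (norm q)\<^sup>2 - 2 * Re q)"
    unfolding cmod_power2 by (simp add: power2_eq_square algebra_simps)
  moreover have "norm (1 - of_real s * q) = 1 \<longleftrightarrow> (norm (1 - of_real s * q))\<^sup>2 = 1"
    using norm_ge_zero[of "1 - of_real s * q"] by (auto simp: power2_eq_1_iff simp del: norm_ge_zero)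
  ultimately show ?thesis
    using assms by (auto simp: field_simps)
qed

lemma neg_div_cnj_eq:
  fixes q :: complex
  assumes "q \<noteq> 0"
  shows "- q / cnj q = 1 - of_real (2 * Re q / (norm q)\<^sup>2) * q"
proof -
  define t where "t = 2 * Re q / (norm q)\<^sup>2"
  have "of_real t * (q * cnj q) = of_real (t * (norm q)\<^sup>2)"
    unfolding of_real_mult complex_norm_square ..
  also have "\<dots> = q + cnj q"
    using assms by (simp add: t_def complex_add_cnj)
  finally have "(1 - of_real t * q) * cnj q = - q"
    by (simp add: algebra_simps)
  then have "- q / cnj q = 1 - of_real t * q"
    using assms by (intro divide_eq_imp) auto
  then show ?thesis
    by (simp only: t_def)
qed

lemma norm_one_minus_cnj_mult:
  assumes "norm v = 1"
  shows "norm (1 - cnj v * P) = norm (v - P)"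
proof -
  have "v * cnj v = 1"
    using assms by (simp flip: complex_norm_square)
  then have "v - P = v * (1 - cnj v * P)"
    by (simp add: algebra_simps)
  then show ?thesis
    using assms by (simp add: norm_mult)
qed

lemma Re_one_minus_cnj_mult_pos:
  assumes "norm v = 1" "norm P < 1"
  shows "0 < Re (1 - cnj v * P)"
proof -
  have "Re (cnj v * P) \<le> norm (cnj v * P)" by (rule complex_Re_le_cmod)
  also have "\<dots> = norm P" using assms by (simp add: norm_mult)
  finally show ?thesis using assms by simp
qed

lemma psi_eq:
  assumes v: "norm v = 1" and P: "norm P < 1"
  defines "q \<equiv> 1 - cnj v * P"
  shows "psi P v = - v * q / cnj q"
proof -
  define t0 where "t0 = 2 * Re q / (norm q)\<^sup>2"
  have "0 < Re q" unfolding q_def using v P by (rule Re_one_minus_cnj_mult_pos)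
  then have q0: "q \<noteq> 0" and "t0 \<noteq> 0" by (auto simp: t0_def)
  have "v * cnj v = 1"
    using v by (simp flip: complex_norm_square)
  then have line: "v + of_real s * (P - v) = v * (1 - of_real s * q)" for s
    by (simp add: q_def algebra_simps)
  have cand: "- v * q / cnj q = v * (1 - of_real t0 * q)"
    by (simp only: t0_def flip: neg_div_cnj_eq[OF q0]) simp
  show ?thesis
    unfolding psi_def
  proof (rule the_equality)
    have "norm (1 - of_real t0 * q) = 1"
      using norm_one_minus_scaled_eq_1_iff[OF q0, of t0, folded t0_def] by simp
    then show "norm (- v * q / cnj q) = 1 \<and> - v * q / cnj q \<noteq> v \<and>
        (\<exists>t::real. - v * q / cnj q = v + of_real t * (P - v))"
      unfolding cand line using \<open>t0 \<noteq> 0\<close> q0 v by (auto simp: norm_mult)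
  next
    fix w assume "norm w = 1 \<and> w \<noteq> v \<and> (\<exists>t::real. w = v + of_real t * (P - v))"
    then obtain s where w: "w = v * (1 - of_real s * q)" "w \<noteq> v" "norm w = 1"
      by (auto simp: line)
    then have "s = t0"
      using norm_one_minus_scaled_eq_1_iff[OF q0, of s, folded t0_def] v by (auto simp: norm_mult)
    then show "w = - v * q / cnj q"
      using w cand by simp
  qed
qed

lemma sgn_power2_eq_div_cnj:
  fixes z :: complex
  assumes "z \<noteq> 0"
  shows "(sgn z)\<^sup>2 = z / cnj z"
proof -
  have "(of_real (norm z))\<^sup>2 = z * cnj z"
    using complex_norm_square[of z] by simp
  then show ?thesis
    using assms by (simp add: sgn_eq power_divide) (simp add: power2_eq_square)
qed

lemma Re_one_plus_div_one_minus: "Re ((1 + z) / (1 - z)) = (1 - (norm z)\<^sup>2) / (norm (1 - z))\<^sup>2"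
  unfolding cmod_power2 by (simp add: Re_divide power2_eq_square algebra_simps)

definition psi_lift :: "complex \<Rightarrow> real \<Rightarrow> real" where
  "psi_lift P u = u + 1/2 + Im (Ln (1 - cnj (circ_pi u) * P)) / pi"

lemma circ_pi_psi_lift:
  assumes "norm P < 1"
  shows "circ_pi (psi_lift P u) = psi P (circ_pi u)"
proof -
  define q where "q = 1 - cnj (circ_pi u) * P"
  have "0 < Re q"
    unfolding q_def using assms by (intro Re_one_minus_cnj_mult_pos) auto
  then have "q \<noteq> 0" by auto
  have "circ_pi (Im (Ln q) / pi) = (cis (Im (Ln q)))\<^sup>2"
    by (simp add: circ_pi_def power2_eq_square cis_mult)
  also have "\<dots> = q / cnj q"
    using \<open>q \<noteq> 0\<close> by (simp add: cis_Arg sgn_power2_eq_div_cnj flip: Arg_eq_Im_Ln)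
  finally have "circ_pi (psi_lift P u) = - circ_pi u * q / cnj q"
    by (simp add: psi_lift_def circ_pi_add circ_pi_half flip: q_def)
  also have "\<dots> = psi P (circ_pi u)"
    unfolding q_def using assms by (simp add: psi_eq)
  finally show ?thesis .
qed

lemma psi_lift_0:
  assumes "norm P < 1"
  shows "0 \<le> psi_lift P 0" "psi_lift P 0 < 1"
  using Re_Ln_pos_lt_imp[OF Re_one_minus_cnj_mult_pos[OF norm_circ_pi assms, of 0]]
  by (auto simp: psi_lift_def field_simps abs_less_iff)

lemma has_real_derivative_psi_lift:
  assumes "norm P < 1"
  shows "(psi_lift P has_real_derivative (1 - (norm P)\<^sup>2) / (norm (circ_pi u - P))\<^sup>2) (at u)"
proof -
  define z where "z = cnj (circ_pi u) * P"
  have "0 < Re (1 - z)"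
    unfolding z_def using assms by (intro Re_one_minus_cnj_mult_pos) auto
  then have "1 - z \<notin> \<real>\<^sub>\<le>\<^sub>0" "z \<noteq> 1"
    by (auto simp: complex_nonpos_Reals_iff)
  have "((\<lambda>w. Ln (1 - exp (- (2 * of_real pi * \<i>) * w) * P)) has_field_derivative
      2 * of_real pi * \<i> * z / (1 - z)) (at (of_real u))"
    using \<open>1 - z \<notin> \<real>\<^sub>\<le>\<^sub>0\<close> \<open>z \<noteq> 1\<close>
    by (auto intro!: derivative_eq_intros simp: z_def cnj_circ_pi_eq_exp field_simps)
  then have Im_Ln: "((\<lambda>t. Im (Ln (1 - cnj (circ_pi t) * P))) has_real_derivative
      Im (2 * of_real pi * \<i> * z / (1 - z))) (at u)"
    unfolding cnj_circ_pi_eq_exp by (intro has_field_derivative_Im has_vector_derivative_real_field)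
  have "(psi_lift P has_real_derivative 1 + Im (2 * of_real pi * \<i> * z / (1 - z)) / pi) (at u)"
    unfolding psi_lift_def [abs_def]
    using DERIV_add[OF DERIV_add[OF DERIV_ident DERIV_const] DERIV_cdivide[OF Im_Ln]] by simp
  moreover have "1 + Im (2 * of_real pi * \<i> * z / (1 - z)) / pi = Re ((1 + z) / (1 - z))"
  proof -
    define w where "w = z / (1 - z)"
    have "2 * of_real pi * \<i> * z / (1 - z) = 2 * of_real pi * \<i> * w"
      by (simp add: w_def)
    moreover have "(1 + z) / (1 - z) = 1 + 2 * w"
      using \<open>z \<noteq> 1\<close> by (simp add: w_def field_simps)
    ultimately show ?thesis
      by simp
  qed
  moreover have "norm z = norm P" "norm (1 - z) = norm (circ_pi u - P)"
    by (simp_all add: z_def norm_mult norm_one_minus_cnj_mult)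
  ultimately show ?thesis
    by (simp add: Re_one_plus_div_one_minus)
qed

lemma circ_lift_psi:
  assumes "norm P < 1"
  shows "circ_lift (psi P) = psi_lift P"
proof (rule circ_lift_eqI)
  show "continuous_on UNIV (psi_lift P)"
    using has_real_derivative_psi_lift[OF assms] DERIV_isCont continuous_at_imp_continuous_on
    by blast
qed (use assms circ_pi_psi_lift psi_lift_0 in auto)

lemma circ_deriv_psi:
  assumes "norm P < 1"
  shows "circ_deriv (psi P) (circ_pi t) = (1 - (norm P)\<^sup>2) / (norm (circ_pi t - P))\<^sup>2"
proof -
  define u where "u = (SOME u. circ_pi u = circ_pi t)"
  have "circ_pi u = circ_pi t"
    unfolding u_def by (rule someI) simp
  then show ?thesis
    unfolding circ_deriv_def circ_lift_psi[OF assms] u_def [symmetric]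
    using DERIV_imp_deriv[OF has_real_derivative_psi_lift[OF assms]] by simp
qed

lemma circ_deriv_psi_le:
  assumes "norm P < 1" and "norm (circ_pi s - P) \<le> norm (circ_pi t - P)"
  shows "circ_deriv (psi P) (circ_pi t) \<le> circ_deriv (psi P) (circ_pi s)"
proof -
  have "P \<noteq> circ_pi s"
    using assms(1) by auto
  then have "0 < norm (circ_pi s - P)" "0 < norm (circ_pi t - P)"
    using assms(2) by auto
  moreover have "(norm (circ_pi s - P))\<^sup>2 \<le> (norm (circ_pi t - P))\<^sup>2"
    using assms(2) by (simp add: power_mono)
  moreover have "0 \<le> 1 - (norm P)\<^sup>2"
    using assms(1) by (simp add: abs_square_le_1 less_imp_le)
  ultimately show ?thesis
    unfolding circ_deriv_psi[OF assms(1)] by (intro divide_left_mono) auto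
qed

lemma norm_circ_pi_diff_scaled_sq:
  "(norm (circ_pi t - of_real \<rho> * circ_pi a))\<^sup>2 = 1 + \<rho>\<^sup>2 - 2 * \<rho> * cos (2 * pi * (t - a))"
proof -
  define x where "x = 2 * pi * (t - a)"
  have "circ_pi t - of_real \<rho> * circ_pi a = circ_pi a * (cis x - of_real \<rho>)"
    unfolding x_def using circ_pi_diff[of t a] by (simp add: circ_pi_def field_simps)
  then have "(norm (circ_pi t - of_real \<rho> * circ_pi a))\<^sup>2 = (cos x - \<rho>)\<^sup>2 + (sin x)\<^sup>2"
    by (simp add: norm_mult cmod_power2)
  also have "\<dots> = 1 + \<rho>\<^sup>2 - 2 * \<rho> * cos x"
    using sin_cos_squared_add[of x] by algebra
  finally show ?thesis
    unfolding x_def .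
qed

lemma cos_antimono_half_turn:
  assumes "a \<le> s" "s \<le> t" "t \<le> a + 1/2"
  shows "cos (2 * pi * (t - a)) \<le> cos (2 * pi * (s - a))"
  by (rule cos_monotone_0_pi_le) (use assms in auto)

lemma circ_deriv_psi_antimono_half_turn:
  assumes "norm P < 1" "P = of_real \<rho> * circ_pi a" "0 \<le> \<rho>"
  shows "monotone_on {a..a + 1/2} (\<le>) (\<ge>) (\<lambda>t. circ_deriv (psi P) (circ_pi t))"
proof (rule monotone_onI)
  fix s t assume "s \<in> {a..a + 1/2}" "t \<in> {a..a + 1/2}" "s \<le> t"
  then have "\<rho> * cos (2 * pi * (t - a)) \<le> \<rho> * cos (2 * pi * (s - a))"
    using assms(3) cos_antimono_half_turn by (intro mult_left_mono) auto
  then have "(norm (circ_pi s - P))\<^sup>2 \<le> (norm (circ_pi t - P))\<^sup>2"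
    unfolding assms(2) norm_circ_pi_diff_scaled_sq by linarith
  then have "norm (circ_pi s - P) \<le> norm (circ_pi t - P)"
    by (rule power2_le_imp_le) simp
  then show "circ_deriv (psi P) (circ_pi t) \<le> circ_deriv (psi P) (circ_pi s)"
    by (rule circ_deriv_psi_le[OF assms(1)])
qed

lemma circ_deriv_psi_mono_half_turn:
  assumes "norm P < 1" "P = of_real \<rho> * circ_pi a" "\<rho> \<le> 0"
  shows "mono_on {a..a + 1/2} (\<lambda>t. circ_deriv (psi P) (circ_pi t))"
proof (rule mono_onI)
  fix s t assume "s \<in> {a..a + 1/2}" "t \<in> {a..a + 1/2}" "s \<le> t"
  then have "- \<rho> * cos (2 * pi * (t - a)) \<le> - \<rho> * cos (2 * pi * (s - a))"
    using assms(3) cos_antimono_half_turn by (intro mult_left_mono) auto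
  then have "(norm (circ_pi t - P))\<^sup>2 \<le> (norm (circ_pi s - P))\<^sup>2"
    unfolding assms(2) norm_circ_pi_diff_scaled_sq by linarith
  then have "norm (circ_pi t - P) \<le> norm (circ_pi s - P)"
    by (rule power2_le_imp_le) simp
  then show "circ_deriv (psi P) (circ_pi s) \<le> circ_deriv (psi P) (circ_pi t)"
    by (rule circ_deriv_psi_le[OF assms(1)])
qed

lemma unit_real_multiple_eq_sgn:
  fixes P u :: complex
  assumes "norm u = 1" "u = of_real t * P"
  shows "u = sgn P \<or> u = - sgn P"
proof -
  define c where "c = t * norm P"
  have "u = of_real c * sgn P"
    using assms(2) by (simp add: c_def sgn_eq field_simps)
  moreover have "\<bar>c\<bar> = 1"
    using assms by (simp add: c_def norm_mult abs_mult)
  then have "c = 1 \<or> c = -1"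
    by linarith
  ultimately show ?thesis
    by auto
qed

lemma dist_sgn:
  fixes P :: complex
  assumes "P \<noteq> 0" "norm P < 1"
  shows "dist (sgn P) P = 1 - norm P" "dist (- sgn P) P = 1 + norm P"
proof -
  have "sgn P - P = of_real (1 - norm P) * sgn P" "- sgn P - P = - of_real (1 + norm P) * sgn P"
    using assms(1) by (simp_all add: sgn_eq field_simps)
  then show "dist (sgn P) P = 1 - norm P" "dist (- sgn P) P = 1 + norm P"
    using assms by (simp_all add: dist_norm norm_mult norm_sgn del: of_real_diff of_real_add)
qed

lemma diameter_endpoints_eq_sgn:
  fixes P u1 u2 :: complex
  assumes "P \<noteq> 0" "norm P < 1" "norm u1 = 1" "norm u2 = 1"
    and "\<exists>t::real. u1 = of_real t * P" "\<exists>t::real. u2 = of_real t * P"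
    and "dist u1 P < dist u2 P"
  shows "u1 = sgn P" "u2 = - sgn P"
proof -
  have "u1 = sgn P \<or> u1 = - sgn P" "u2 = sgn P \<or> u2 = - sgn P"
    using assms(3-6) unit_real_multiple_eq_sgn by blast+
  then show "u1 = sgn P" "u2 = - sgn P"
    using assms(7) dist_sgn[OF assms(1,2)] by auto
qed

lemma incr_on_arc_circ_deriv_psi:
  assumes "P \<noteq> 0" "norm P < 1"
  shows "incr_on_arc (circ_deriv (psi P)) (- sgn P) (sgn P)"
  unfolding incr_on_arc_def
proof (intro allI impI)
  fix a b assume a: "circ_pi a = - sgn P" and "circ_pi b = sgn P"
  then have "frac (b - a) = 1/2"
    by (intro frac_diff_antipodal) simp
  moreover have P_a: "P = of_real (- norm P) * circ_pi a"
    using a assms(1) by (simp add: sgn_eq)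
  ultimately show "mono_on {a..<a + frac (b - a)} (\<lambda>t. circ_deriv (psi P) (circ_pi t))"
    by (intro mono_on_subset[OF circ_deriv_psi_mono_half_turn[OF assms(2) P_a]]) auto
qed

lemma decr_on_arc_circ_deriv_psi:
  assumes "P \<noteq> 0" "norm P < 1"
  shows "decr_on_arc (circ_deriv (psi P)) (sgn P) (- sgn P)"
  unfolding decr_on_arc_def
proof (intro allI impI)
  fix a b assume a: "circ_pi a = sgn P" and "circ_pi b = - sgn P"
  then have "frac (b - a) = 1/2"
    by (intro frac_diff_antipodal) simp
  moreover have P_a: "P = of_real (norm P) * circ_pi a"
    using a assms(1) by (simp add: sgn_eq)
  ultimately show "monotone_on {a..<a + frac (b - a)} (\<le>) (\<ge>) (\<lambda>t. circ_deriv (psi P) (circ_pi t))"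
    by (intro monotone_on_subset[OF circ_deriv_psi_antimono_half_turn[OF assms(2) P_a]]) auto
qed

theorem lemma2p3:
  fixes P u1 u2 :: complex
  assumes "P \<in> ball 0 1" and "P \<noteq> 0"
    and "norm u1 = 1" and "norm u2 = 1"
    and "\<exists>t::real. u1 = of_real t * P" and "\<exists>t::real. u2 = of_real t * P"
    and "dist u1 P < dist u2 P"
  shows "incr_on_arc (circ_deriv (psi P)) u2 u1 \<and> decr_on_arc (circ_deriv (psi P)) u1 u2"
proof -
  have P: "norm P < 1"
    using assms(1) by simp
  then have "u1 = sgn P" "u2 = - sgn P"
    using diameter_endpoints_eq_sgn[OF assms(2) P assms(3-7)] by auto
  then show ?thesis
    using incr_on_arc_circ_deriv_psi[OF assms(2) P] decr_on_arc_circ_deriv_psi[OF assms(2) P] by simp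
qed

end
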